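(* For every integer $n\ge 3$, let $G_1$ be the graph obtained from the crown graph $H_{n,n}$ by adding one isolated vertex $v$. Then the co-bipartite graph $\overline{G_1}$ (which is $\overline{H_{n,n}}$ together with a vertex $v$ adjacent to all other vertices) is not word-representable.
   Context: A graph $G=(V,E)$ is word-representable if there exists a word $w$ over the alphabet $V$, containing every letter of $V$ at least once, such that for all distinct $x,y\in V$, the letters $x$ and $y$ alternate in $w$ (i.e., the subword of $w$ obtained by deleting all letters other than $x,y$ has no two equal consecutive letters) if and only if $xy\in E$. The crown graph $H_{n,n}$ is the bipartite graph obtained from the complete bipartite graph $K_{n,n}$ with parts $\{1,\dots,n\}$ and $\{1',\dots,n'\}$ by removing the perfect matching $\{ii' : 1\le i\le n\}$. $\overline{G}$ denotes the complement of $G$; a graph is co-bipartite if its complement is bipartite. *)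

theory Defs
  imports Main
begin

definition alternate :: "'a list \<Rightarrow> 'a \<Rightarrow> 'a \<Rightarrow> bool" where
  "alternate w x y \<longleftrightarrow>
     (let u = filter (\<lambda>z. z = x \<or> z = y) w in
      \<forall>i. Suc i < length u \<longrightarrow> u ! i \<noteq> u ! Suc i)"

(* graph given by vertex set V and (symmetric, irreflexive) adjacency E *)
definition word_represents :: "'a set \<Rightarrow> ('a \<Rightarrow> 'a \<Rightarrow> bool) \<Rightarrow> 'a list \<Rightarrow> bool" where
  "word_represents V E w \<longleftrightarrow>
     set w = V \<and>
     (\<forall>x\<in>V. \<forall>y\<in>V. x \<noteq> y \<longrightarrow> (alternate w x y \<longleftrightarrow> E x y))"

definition word_representable :: "'a set \<Rightarrow> ('a \<Rightarrow> 'a \<Rightarrow> bool) \<Rightarrow> bool" where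
  "word_representable V E \<longleftrightarrow> (\<exists>w. word_represents V E w)"

definition complement_graph :: "'a set \<Rightarrow> ('a \<Rightarrow> 'a \<Rightarrow> bool) \<Rightarrow> 'a \<Rightarrow> 'a \<Rightarrow> bool" where
  "complement_graph V E x y \<longleftrightarrow> x \<in> V \<and> y \<in> V \<and> x \<noteq> y \<and> \<not> E x y"

(* crown graph H_{n,n}: vertex (i,False) is i, vertex (i,True) is i' *)
definition crown_vertices :: "nat \<Rightarrow> (nat \<times> bool) set" where
  "crown_vertices n = {1..n} \<times> UNIV"

definition crown_adj :: "nat \<Rightarrow> nat \<times> bool \<Rightarrow> nat \<times> bool \<Rightarrow> bool" where
  "crown_adj n p q \<longleftrightarrow> p \<in> crown_vertices n \<and> q \<in> crown_vertices n \<and>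
      snd p \<noteq> snd q \<and> fst p \<noteq> fst q"

(* G_1 = H_{n,n} plus an isolated vertex v = None; other vertices are Some p *)
definition G1_vertices :: "nat \<Rightarrow> (nat \<times> bool) option set" where
  "G1_vertices n = insert None (Some ` crown_vertices n)"

definition G1_adj :: "nat \<Rightarrow> (nat \<times> bool) option \<Rightarrow> (nat \<times> bool) option \<Rightarrow> bool" where
  "G1_adj n a b \<longleftrightarrow> (case (a, b) of (Some p, Some q) \<Rightarrow> crown_adj n p q | _ \<Rightarrow> False)"

end

theory Submission
  imports Defs "HOL-Library.Sublist"
begin

(* Two letters x and y alternate in w exactly when the count difference |p|_x - |p|_y over the
   prefixes p of w takes values in two consecutive integers. If a letter v alternates with both x
   and y, shift the prefix counts of x and y by constants so that the count of v exceeds each by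
   0 or 1; then x and y alternate iff one shifted count dominates the other on every prefix. Hence
   the neighbourhood of any vertex of a word-representable graph is a comparability graph
   (Halldorsson, Kitaev and Pyatkin).
   In the complement of G_1 the isolated vertex becomes universal, and its neighbourhood, the
   complement of H_{n,n}, contains a triangle 1, 2, 3 whose vertices have the private neighbours
   1', 2', 3'. This admits no transitive orientation: every orientation of a triangle contains a
   directed path of length two, and the private neighbour of its middle vertex would be
   comparable with one of the ends. *)

definition count_diff :: "'a \<Rightarrow> 'a \<Rightarrow> 'a list \<Rightarrow> int" where
  "count_diff x y w = int (count_list w x) - int (count_list w y)"

lemma count_diff_Nil [simp]: "count_diff x y [] = 0"
  by (simp add: count_diff_def)

lemma count_diff_singleton:
  "x \<noteq> y \<Longrightarrow> count_diff x y [a] = (if a = x then 1 else if a = y then -1 else 0)"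
  by (simp add: count_diff_def)

lemma count_diff_prefixes_Cons:
  "count_diff x y ` set (prefixes (a # w)) =
     insert 0 ((+) (count_diff x y [a]) ` count_diff x y ` set (prefixes w))"
  by (auto simp: image_image count_diff_def)

lemma zero_in_count_diff_prefixes: "0 \<in> count_diff x y ` set (prefixes w)"
  by (rule image_eqI[of _ _ "[]"]) (auto simp: count_diff_def)

lemma count_diff_prefixes_filter:
  assumes "P x" "P y"
  shows "count_diff x y ` set (prefixes (filter P w)) = count_diff x y ` set (prefixes w)"
proof (induction w)
  case (Cons a w)
  show ?case
  proof (cases "P a")
    case False
    with assms have "count_diff x y [a] = 0" by (auto simp: count_diff_def)
    with False Cons.IH show ?thesis
      by (simp only: count_diff_prefixes_Cons filter.simps if_False)
        (simp add: insert_absorb zero_in_count_diff_prefixes)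
  qed (simp only: count_diff_prefixes_Cons filter.simps if_True Cons.IH)
qed simp

lemma subset_consecutive_iff:
  fixes S :: "int set"
  assumes "0 \<in> S" "e \<in> S" "\<bar>e\<bar> = 1"
  shows "(\<exists>k. S \<subseteq> {k, k + 1}) \<longleftrightarrow> S \<subseteq> {0, e}"
proof
  assume "\<exists>k. S \<subseteq> {k, k + 1}"
  then obtain k where "S \<subseteq> {k, k + 1}" by blast
  with assms have "{k, k + 1} = {0, e}" by (auto simp: abs_if split: if_splits)
  with \<open>S \<subseteq> {k, k + 1}\<close> show "S \<subseteq> {0, e}" by simp
next
  assume "S \<subseteq> {0, e}"
  moreover from assms(3) have "e = 1 \<or> e = -1" by arith
  then have "{0, e} = {min 0 e, min 0 e + 1}" by auto
  ultimately show "\<exists>k. S \<subseteq> {k, k + 1}" by auto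
qed

lemma insert_shift_subset_iff:
  fixes d :: int
  shows "insert 0 ((+) d ` S) \<subseteq> {0, d} \<longleftrightarrow> S \<subseteq> {0, - d}"
  by (auto simp: image_subset_iff)

lemma distinct_adj_iff_count_diff_consecutive:
  assumes "x \<noteq> y" "set u \<subseteq> {x, y}"
  shows "distinct_adj u \<longleftrightarrow> (\<exists>k. count_diff x y ` set (prefixes u) \<subseteq> {k, k + 1})"
  using assms(2)
proof (induction u)
  case Nil
  show ?case by auto
next
  case (Cons a u)
  let ?S = "\<lambda>u. count_diff x y ` set (prefixes u)"
  let ?d = "\<lambda>a. count_diff x y [a]"
  have unit_step: "\<bar>?d c\<bar> = 1" if "c \<in> {x, y}" for c
    using that assms(1) by (auto simp: count_diff_singleton)
  have "?d a \<in> ?S (a # u)"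
    using zero_in_count_diff_prefixes[of x y u] by (simp only: count_diff_prefixes_Cons) force
  then have "(\<exists>k. ?S (a # u) \<subseteq> {k, k + 1}) \<longleftrightarrow> ?S (a # u) \<subseteq> {0, ?d a}"
    using Cons.prems unit_step zero_in_count_diff_prefixes by (intro subset_consecutive_iff) auto
  also have "\<dots> \<longleftrightarrow> ?S u \<subseteq> {0, - ?d a}"
    unfolding count_diff_prefixes_Cons by (rule insert_shift_subset_iff)
  finally have consecutive_Cons:
    "(\<exists>k. ?S (a # u) \<subseteq> {k, k + 1}) \<longleftrightarrow> ?S u \<subseteq> {0, - ?d a}" .
  show ?case
  proof (cases "u = []")
    case True
    then show ?thesis using consecutive_Cons by simp
  next
    case False
    then obtain b u' where u: "u = b # u'" by (cases u) auto
    have "?d b \<in> ?S u"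
      using zero_in_count_diff_prefixes[of x y u'] unfolding u count_diff_prefixes_Cons by force
    then have "distinct_adj u \<longleftrightarrow> ?S u \<subseteq> {0, ?d b}"
      using Cons.IH Cons.prems unit_step zero_in_count_diff_prefixes u
      by (subst subset_consecutive_iff[symmetric]) auto
    moreover have "a \<noteq> b \<longleftrightarrow> ?d b = - ?d a"
      using Cons.prems u assms(1) by (auto simp: count_diff_singleton)
    moreover have "?d b \<noteq> 0"
      using Cons.prems u unit_step by fastforce
    ultimately have "distinct_adj (a # u) \<longleftrightarrow> ?d b = - ?d a \<and> ?S u \<subseteq> {0, ?d b}"
      using u by (simp add: distinct_adj_Cons)
    also have "\<dots> \<longleftrightarrow> ?S u \<subseteq> {0, - ?d a}"
      using \<open>?d b \<in> ?S u\<close> \<open>?d b \<noteq> 0\<close> by (metis insertE singletonD subsetD)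
    finally show ?thesis using consecutive_Cons by simp
  qed
qed

lemma alternate_iff_count_diff_consecutive:
  assumes "x \<noteq> y"
  shows "alternate w x y \<longleftrightarrow> (\<exists>k. count_diff x y ` set (prefixes w) \<subseteq> {k, k + 1})"
proof -
  let ?u = "filter (\<lambda>z. z = x \<or> z = y) w"
  have "alternate w x y \<longleftrightarrow> distinct_adj ?u"
    by (simp add: alternate_def distinct_adj_conv_nth Let_def)
  also have "\<dots> \<longleftrightarrow> (\<exists>k. count_diff x y ` set (prefixes ?u) \<subseteq> {k, k + 1})"
    using assms by (intro distinct_adj_iff_count_diff_consecutive) auto
  also have "count_diff x y ` set (prefixes ?u) = count_diff x y ` set (prefixes w)"
    by (rule count_diff_prefixes_filter) auto
  finally show ?thesis .
qed

(* R need only be transitive: ordering each class of mutually related vertices linearly turns it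
   into a transitive orientation. *)
definition comparability_graph :: "'a set \<Rightarrow> ('a \<Rightarrow> 'a \<Rightarrow> bool) \<Rightarrow> bool" where
  "comparability_graph V E \<longleftrightarrow>
     (\<exists>R. transp R \<and> (\<forall>x\<in>V. \<forall>y\<in>V. x \<noteq> y \<longrightarrow> (E x y \<longleftrightarrow> R x y \<or> R y x)))"

lemma consecutive_values_iff_comparable:
  fixes f g h :: "'b \<Rightarrow> int"
  assumes "\<forall>p\<in>P. h p - f p \<in> {0, 1}" and "\<forall>p\<in>P. h p - g p \<in> {0, 1}"
  shows "(\<exists>k. (\<lambda>p. f p - g p + c) ` P \<subseteq> {k, k + 1}) \<longleftrightarrow>
           (\<forall>p\<in>P. f p \<le> g p) \<or> (\<forall>p\<in>P. g p \<le> f p)"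
proof
  assume "\<exists>k. (\<lambda>p. f p - g p + c) ` P \<subseteq> {k, k + 1}"
  then obtain k where "(\<lambda>p. f p - g p + c) ` P \<subseteq> {k, k + 1}" by blast
  then have "\<forall>p\<in>P. f p - g p \<in> {k - c, k - c + 1}" by (force simp: image_subset_iff)
  moreover have "\<forall>p\<in>P. \<bar>f p - g p\<bar> \<le> 1" using assms by fastforce
  ultimately show "(\<forall>p\<in>P. f p \<le> g p) \<or> (\<forall>p\<in>P. g p \<le> f p)"
    by (cases "k - c < 0") fastforce+
next
  have "\<forall>p\<in>P. \<bar>f p - g p\<bar> \<le> 1" using assms by fastforce
  moreover assume "(\<forall>p\<in>P. f p \<le> g p) \<or> (\<forall>p\<in>P. g p \<le> f p)"
  ultimately have "(\<lambda>p. f p - g p + c) ` P \<subseteq> {c - 1, c} \<or>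
                  (\<lambda>p. f p - g p + c) ` P \<subseteq> {c, c + 1}"
    by (force simp: image_subset_iff)
  then show "\<exists>k. (\<lambda>p. f p - g p + c) ` P \<subseteq> {k, k + 1}" by force
qed

lemma word_represents_neighbourhood_comparability_graph:
  assumes rep: "word_represents V E w" and "v \<in> V"
  shows "comparability_graph {x \<in> V. x \<noteq> v \<and> E v x} E"
proof -
  define N where "N = {x \<in> V. x \<noteq> v \<and> E v x}"
  let ?P = "set (prefixes w)"
  have alt: "alternate w x y \<longleftrightarrow> E x y" if "x \<in> V" "y \<in> V" "x \<noteq> y" for x y
    using rep that by (simp add: word_represents_def)
  have "\<forall>x\<in>N. \<exists>k. count_diff v x ` ?P \<subseteq> {k, k + 1}"
    using alt \<open>v \<in> V\<close> by (auto simp: N_def alternate_iff_count_diff_consecutive)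
  then obtain k where k: "\<And>x. x \<in> N \<Longrightarrow> count_diff v x ` ?P \<subseteq> {k x, k x + 1}"
    by metis
  define level where "level x p = int (count_list p x) + k x" for x p
  define R where "R x y \<longleftrightarrow> (\<forall>p\<in>?P. level x p \<le> level y p)" for x y
  have "transp R"
    by (auto simp: transp_def R_def intro: order_trans)
  moreover have "E x y \<longleftrightarrow> R x y \<or> R y x" if "x \<in> N" "y \<in> N" "x \<noteq> y" for x y
  proof -
    have v_level: "\<forall>p\<in>?P. int (count_list p v) - level z p \<in> {0, 1}" if "z \<in> N" for z
      using k[OF that] by (force simp: level_def count_diff_def image_subset_iff)
    have "E x y \<longleftrightarrow> (\<exists>j. count_diff x y ` ?P \<subseteq> {j, j + 1})"
      using alt that by (simp add: N_def alternate_iff_count_diff_consecutive)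
    also have "count_diff x y = (\<lambda>p. level x p - level y p + (k y - k x))"
      by (auto simp: count_diff_def level_def)
    also have "(\<exists>j. (\<lambda>p. level x p - level y p + (k y - k x)) ` ?P \<subseteq> {j, j + 1})
                 \<longleftrightarrow> R x y \<or> R y x"
      unfolding R_def using v_level that by (intro consecutive_values_iff_comparable)
    finally show ?thesis .
  qed
  ultimately show ?thesis unfolding comparability_graph_def N_def by blast
qed

lemma transp_no_triangle_with_private_neighbours:
  fixes a b :: "nat \<Rightarrow> 'a"
  assumes "transp R"
    and triangle: "\<And>i j. i \<in> {1, 2, 3} \<Longrightarrow> j \<in> {1, 2, 3} \<Longrightarrow> i \<noteq> j \<Longrightarrow>
                     R (a i) (a j) \<or> R (a j) (a i)"
    and matched: "\<And>i. i \<in> {1, 2, 3} \<Longrightarrow> R (a i) (b i) \<or> R (b i) (a i)"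
    and unmatched: "\<And>i j. i \<in> {1, 2, 3} \<Longrightarrow> j \<in> {1, 2, 3} \<Longrightarrow> i \<noteq> j \<Longrightarrow>
                      \<not> R (a i) (b j) \<and> \<not> R (b j) (a i)"
  shows False
proof -
  have "\<exists>p\<in>{1, 2, 3}. \<exists>q\<in>{1, 2, 3}. \<exists>r\<in>{1, 2, 3}.
          p \<noteq> q \<and> q \<noteq> r \<and> p \<noteq> r \<and> R (a p) (a q) \<and> R (a q) (a r)"
    using triangle[of 1 2] triangle[of 1 3] triangle[of 2 3] by simp blast
  then obtain p q r
    where pqr: "p \<in> {1, 2, 3}" "q \<in> {1, 2, 3}" "r \<in> {1, 2, 3}" "p \<noteq> q" "q \<noteq> r"
      and "R (a p) (a q)" "R (a q) (a r)"
    by blast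
  from matched[OF pqr(2)] show False
  proof
    assume "R (a q) (b q)"
    with \<open>transp R\<close> \<open>R (a p) (a q)\<close> have "R (a p) (b q)" by (rule transpD)
    with unmatched[of p q] pqr show False by blast
  next
    assume "R (b q) (a q)"
    with \<open>transp R\<close> \<open>R (a q) (a r)\<close> have "R (b q) (a r)" by (blast dest: transpD)
    with unmatched[of r q] pqr show False by blast
  qed
qed

lemma complement_crown_not_comparability_graph:
  fixes n :: nat
  defines "E \<equiv> complement_graph (G1_vertices n) (G1_adj n)"
  assumes "n \<ge> 3"
  shows "\<not> comparability_graph (Some ` crown_vertices n) E"
proof
  assume "comparability_graph (Some ` crown_vertices n) E"
  then obtain R where "transp R" and comparable:
    "\<forall>x\<in>Some ` crown_vertices n. \<forall>y\<in>Some ` crown_vertices n.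
       x \<noteq> y \<longrightarrow> (E x y \<longleftrightarrow> R x y \<or> R y x)"
    unfolding comparability_graph_def by blast
  define a where "a i = Some (i, False)" for i :: nat
  define b where "b i = Some (i, True)" for i :: nat
  have vertices: "a i \<in> Some ` crown_vertices n" "b i \<in> Some ` crown_vertices n"
    if "i \<in> {1, 2, 3}" for i
    using that assms by (auto simp: a_def b_def crown_vertices_def)
  show False
  proof (rule transp_no_triangle_with_private_neighbours[OF \<open>transp R\<close>])
    fix i j :: nat assume ij: "i \<in> {1, 2, 3}" "j \<in> {1, 2, 3}" "i \<noteq> j"
    have "E (a i) (a j)" "\<not> E (a i) (b j)" "a i \<noteq> a j" "a i \<noteq> b j"
      using ij assms
      by (auto simp: E_def complement_graph_def G1_vertices_def G1_adj_def crown_adj_def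
          crown_vertices_def a_def b_def)
    with comparable[rule_format, of "a i" "a j"] comparable[rule_format, of "a i" "b j"] vertices ij
    show "R (a i) (a j) \<or> R (a j) (a i)" and "\<not> R (a i) (b j) \<and> \<not> R (b j) (a i)"
      by simp_all
  next
    fix i :: nat assume i: "i \<in> {1, 2, 3}"
    have "E (a i) (b i)" "a i \<noteq> b i"
      using i assms
      by (auto simp: E_def complement_graph_def G1_vertices_def G1_adj_def crown_adj_def
          crown_vertices_def a_def b_def)
    with comparable[rule_format, of "a i" "b i"] vertices i show "R (a i) (b i) \<or> R (b i) (a i)"
      by simp
  qed
qed

lemma G1_complement_neighbourhood_None:
  "{x \<in> G1_vertices n. x \<noteq> None \<and> complement_graph (G1_vertices n) (G1_adj n) None x} =
     Some ` crown_vertices n"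
  by (auto simp: G1_vertices_def complement_graph_def G1_adj_def)

theorem mainTheorem7:
  fixes n :: nat
  assumes "n \<ge> 3"
  shows "\<not> word_representable (G1_vertices n) (complement_graph (G1_vertices n) (G1_adj n))"
proof
  let ?V = "G1_vertices n" and ?E = "complement_graph (G1_vertices n) (G1_adj n)"
  assume "word_representable ?V ?E"
  then obtain w where "word_represents ?V ?E w"
    unfolding word_representable_def by blast
  then have "comparability_graph {x \<in> ?V. x \<noteq> None \<and> ?E None x} ?E"
    by (rule word_represents_neighbourhood_comparability_graph) (simp add: G1_vertices_def)
  then have "comparability_graph (Some ` crown_vertices n) ?E"
    by (simp only: G1_complement_neighbourhood_None)
  with complement_crown_not_comparability_graph[OF assms] show False by blast
qed

end
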